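(* Let $p\in(0,1)$. Then \[\lim_{n\to\infty}\mathrm d_{\mathrm H}\big(\mathbf R^{(p)}_{\gamma^{(n)}},\mathbf R^{(p)}_\infty\big)=0,\qquad\text{where}\quad \mathbf R^{(p)}_\infty=\{(x,y)\in\mathbb R^2:\ y\le0\le x,\ \sqrt{(1-p)x}+\sqrt{-y}\le(6(1-p))^{1/4}\}.\]
   Context: For $n\ge2$ let $\gamma^{(n)}=(\gamma^{(n)}_1,\dots,\gamma^{(n)}_n)=\sum_{1\le i<j\le n}\widehat E_{j,i}(e_i-e_j)\in\mathbb R^n$, where $e_i$ are standard basis vectors and $\widehat E_{j,i}=\frac{(j-i)(2n-(i+j-1)p)}{(n-ip)(n-(i-1)p)(n-jp)(n-(j-1)p)}$. For a vector $\beta=(\beta_1,\dots,\beta_n)$ with $\beta_1\ge\cdots\ge\beta_n$, $\beta\ne0$, $\sum\beta_i=0$, put $h(i)=\beta_i-\beta_{i+1}$ ($1\le i\le n-1$) and $\mathbf r_k=\big(\sum_{i=1}^{k-1}ih(i),\,-\sum_{i=k}^{n-1}(n-i)h(i)\big)\in\mathbb R^2$ for $k\in[n]$. Let $\mathring{\mathbf R}^{(p)}_\beta$ be the region bounded by the coordinate axes and the polygonal curve $\bigcup_{k=1}^{n-1}[\mathbf r_k,\mathbf r_{k+1}]$ (segments $[\mathbf r,\mathbf r']$), of area $\mathrm A_\beta$, and $\mathbf R^{(p)}_\beta=\mathrm A_\beta^{-1/2}\mathring{\mathbf R}^{(p)}_\beta$. $\mathrm d_{\mathrm H}$ denotes Hausdorff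 distance. *)

theory Defs
  imports "HOL-Analysis.Analysis"
begin

definition hausdorff_dist :: "'a::metric_space set \<Rightarrow> 'a set \<Rightarrow> real" where
  "hausdorff_dist S T = max (SUP x\<in>S. infdist x T) (SUP y\<in>T. infdist y S)"

definition Ehat :: "nat \<Rightarrow> real \<Rightarrow> nat \<Rightarrow> nat \<Rightarrow> real" where
  "Ehat n p j i =
     (real j - real i) * (2 * real n - (real i + real j - 1) * p) /
     ((real n - real i * p) * (real n - (real i - 1) * p) *
      (real n - real j * p) * (real n - (real j - 1) * p))"

definition stdbasis :: "nat \<Rightarrow> nat \<Rightarrow> real" where
  "stdbasis i k = (if k = i then 1 else 0)"

text \<open>gamma^(n) as a vector indexed by {1..n} (values outside are irrelevant/zero).\<close>
definition gammavec :: "nat \<Rightarrow> real \<Rightarrow> nat \<Rightarrow> real" where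
  "gammavec n p = (\<lambda>k. \<Sum>(i,j)\<in>{(i,j). 1 \<le> i \<and> i < j \<and> j \<le> n}.
                         Ehat n p j i * (stdbasis i k - stdbasis j k))"

definition hgap :: "(nat \<Rightarrow> real) \<Rightarrow> nat \<Rightarrow> real" where
  "hgap \<beta> i = \<beta> i - \<beta> (i + 1)"

definition rpt :: "nat \<Rightarrow> (nat \<Rightarrow> real) \<Rightarrow> nat \<Rightarrow> real \<times> real" where
  "rpt n \<beta> k = ((\<Sum>i\<in>{1..<k}. real i * hgap \<beta> i),
                 - (\<Sum>i\<in>{k..<n}. (real n - real i) * hgap \<beta> i))"

text \<open>The closed curve formed by the coordinate axes (segments from the origin to r_1 and
  from r_n to the origin) and the polygonal curve through r_1, ..., r_n.\<close>
definition boundary_curve :: "nat \<Rightarrow> (nat \<Rightarrow> real) \<Rightarrow> (real \<times> real) set" where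
  "boundary_curve n \<beta> =
     closed_segment 0 (rpt n \<beta> 1) \<union>
     (\<Union>k\<in>{1..<n}. closed_segment (rpt n \<beta> k) (rpt n \<beta> (k + 1))) \<union>
     closed_segment (rpt n \<beta> n) 0"

definition Rring :: "nat \<Rightarrow> (nat \<Rightarrow> real) \<Rightarrow> (real \<times> real) set" where
  "Rring n \<beta> = boundary_curve n \<beta> \<union> inside (boundary_curve n \<beta>)"

definition Area :: "nat \<Rightarrow> (nat \<Rightarrow> real) \<Rightarrow> real" where
  "Area n \<beta> = measure lebesgue (Rring n \<beta>)"

definition Rnorm :: "nat \<Rightarrow> (nat \<Rightarrow> real) \<Rightarrow> (real \<times> real) set" where
  "Rnorm n \<beta> = (\<lambda>z. (1 / sqrt (Area n \<beta>)) *\<^sub>R z) ` Rring n \<beta>"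

definition Rinf :: "real \<Rightarrow> (real \<times> real) set" where
  "Rinf p = {(x, y). y \<le> 0 \<and> 0 \<le> x \<and>
              sqrt ((1 - p) * x) + sqrt (- y) \<le> (6 * (1 - p)) powr (1/4)}"

end

theory Submission
  imports Defs
begin

text \<open>With a = 1 - p, the vertices r_k = (X_k, Y_k) of gamma^(n) have closed forms, because the
  coefficients Ehat telescope. The function sqrt (a x) + sqrt (- y) is at least
  (1 - 1/(n a)) / sqrt a at every vertex and at most (1 + 2/(n a)) / sqrt a at the corner
  (X_(k+1), Y_k) of the box spanned by each edge. As this function and the chain are concave,
  the region R_gamma is sandwiched between two parabolic regions
  K(a, t) = {sqrt (a x) + sqrt (- y) <= t} whose parameters t both tend to 1 / sqrt a.
  The region K(a, t) has area t^4 / (6 a) and satisfies s K(a, t) = K(a, sqrt s t), so after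
  normalising by the area both bounds converge to K(a, (6 a)^(1/4)) = R_infinity; squeezing
  between parabolic regions with converging parameters forces Hausdorff convergence.\<close>

section \<open>Convex combinations and plane topology\<close>

lemma convex_comb_between:
  fixes A B u :: real
  assumes "0 \<le> u" "u \<le> 1" "A \<le> B"
  shows "A \<le> (1 - u) * A + u * B" "(1 - u) * A + u * B \<le> B"
proof -
  have "u * A \<le> u * B" "(1 - u) * A \<le> (1 - u) * B" using assms by (simp_all add: mult_left_mono)
  thus "A \<le> (1 - u) * A + u * B" "(1 - u) * A + u * B \<le> B" by (simp_all add: algebra_simps)
qed

lemma sqrt_convex_comb_le:
  assumes "0 \<le> A" "0 \<le> B" "0 \<le> u" "u \<le> 1"
  shows "(1 - u) * sqrt A + u * sqrt B \<le> sqrt ((1 - u) * A + u * B)"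
proof (rule real_le_rsqrt)
  have "(1 - u) * A + u * B - ((1 - u) * sqrt A + u * sqrt B)\<^sup>2 = u * (1 - u) * (sqrt A - sqrt B)\<^sup>2"
    using assms by (simp add: power2_eq_square algebra_simps)
  moreover have "0 \<le> u * (1 - u) * (sqrt A - sqrt B)\<^sup>2" using assms by simp
  ultimately show "((1 - u) * sqrt A + u * sqrt B)\<^sup>2 \<le> (1 - u) * A + u * B" by linarith
qed

lemma hausdorff_dist_le:
  assumes "S \<noteq> {}" "T \<noteq> {}" "\<And>x. x \<in> S \<Longrightarrow> infdist x T \<le> B" "\<And>y. y \<in> T \<Longrightarrow> infdist y S \<le> B"
  shows "hausdorff_dist S T \<le> B"
  unfolding hausdorff_dist_def using assms by (auto intro!: cSUP_least)

lemma hausdorff_dist_nonneg: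
  assumes "x \<in> S" "\<And>x. x \<in> S \<Longrightarrow> infdist x T \<le> B"
  shows "0 \<le> hausdorff_dist S T"
proof -
  have "infdist x T \<le> (SUP x\<in>S. infdist x T)"
    using assms by (intro cSUP_upper bdd_aboveI2[where M = B]) auto
  thus ?thesis unfolding hausdorff_dist_def using infdist_nonneg[of x T] by linarith
qed

lemma radial_segment_subset_Compl:
  fixes K :: "'a::real_normed_vector set"
  assumes "\<And>z. z \<in> K \<Longrightarrow> closed_segment 0 z \<subseteq> K" "z \<notin> K" "1 \<le> \<mu>"
  shows "closed_segment z (\<mu> *\<^sub>R z) \<subseteq> - K"
proof
  fix w assume "w \<in> closed_segment z (\<mu> *\<^sub>R z)"
  then obtain u where u: "0 \<le> u" "u \<le> 1" "w = (1 - u + u * \<mu>) *\<^sub>R z"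
    by (auto simp: in_segment algebra_simps)
  define l where "l = 1 - u + u * \<mu>"
  have "1 \<le> l" using u assms(3) unfolding l_def by (simp add: mult_le_cancel_left1)
  show "w \<in> - K"
  proof
    assume "w \<in> K"
    moreover have "(1 / l) *\<^sub>R w \<in> closed_segment 0 w"
      unfolding in_segment using \<open>1 \<le> l\<close> by (intro exI[of _ "1 / l"]) auto
    ultimately have "(1 / l) *\<^sub>R w \<in> K" using assms(1) by blast
    thus False using assms(2) \<open>1 \<le> l\<close> u(3) unfolding l_def[symmetric] by simp
  qed
qed

text \<open>A point outside K is joined by a radial segment to the complement of a ball containing K.\<close>
lemma connected_Compl_if_segments_to_zero:
  fixes K :: "'a::euclidean_space set"
  assumes "bounded K" "2 \<le> DIM('a)" "\<And>z. z \<in> K \<Longrightarrow> closed_segment 0 z \<subseteq> K"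
  shows "connected (- K)" "\<not> bounded (- K)"
proof -
  obtain R where "R > 0" "K \<subseteq> ball 0 R" using bounded_subset_ballD[OF assms(1)] by blast
  hence outer: "- ball 0 R \<subseteq> - K" by blast
  have conn_outer: "connected (- ball (0::'a) R)"
    using assms(2) by (intro connected_complement_bounded_convex) auto
  have unbounded_outer: "\<not> bounded (- ball (0::'a) R)"
    using bounded_Un[of "ball 0 R" "- ball (0::'a) R"] by simp
  thus "\<not> bounded (- K)" using outer bounded_subset by blast
  show "connected (- K)"
  proof (cases "K = {}")
    case False
    hence "0 \<in> K" using assms(3) by fastforce
    define Q where "Q z = closed_segment z (max 1 (R / norm z) *\<^sub>R z) \<union> - ball 0 R" for z :: 'a
    have Q: "connected (Q z) \<and> - ball 0 R \<subseteq> Q z \<and> z \<in> Q z \<and> Q z \<subseteq> - K" if "z \<notin> K" for z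
    proof -
      define \<mu> where "\<mu> = max 1 (R / norm z)"
      have "z \<noteq> 0" using that \<open>0 \<in> K\<close> by blast
      have "1 \<le> \<mu>" unfolding \<mu>_def by simp
      hence "closed_segment z (\<mu> *\<^sub>R z) \<subseteq> - K"
        using radial_segment_subset_Compl[of K z \<mu>] assms(3) that by blast
      moreover have "\<mu> *\<^sub>R z \<notin> ball 0 R"
        using \<open>z \<noteq> 0\<close> by (auto simp: \<mu>_def field_simps max_def)
      ultimately show ?thesis
        using conn_outer outer unfolding Q_def \<mu>_def[symmetric] by (auto intro!: connected_Un)
    qed
    have "- K = \<Union> (Q ` (- K))" using Q by blast
    moreover have "connected (\<Union> (Q ` (- K)))"
    proof (rule connected_Union)
      show "\<And>S. S \<in> Q ` (- K) \<Longrightarrow> connected S" using Q by blast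
      have "- ball (0::'a) R \<noteq> {}" using unbounded_outer by auto
      thus "\<Inter> (Q ` (- K)) \<noteq> {}" using Q by blast
    qed
    ultimately show ?thesis by simp
  qed (simp add: connected_UNIV)
qed

lemma inside_subset_if_segments_to_zero:
  fixes K :: "'a::euclidean_space set"
  assumes "bounded K" "2 \<le> DIM('a)" "\<And>z. z \<in> K \<Longrightarrow> closed_segment 0 z \<subseteq> K" "C \<subseteq> K"
  shows "C \<union> inside C \<subseteq> K"
proof -
  have "inside C \<subseteq> K - C"
    using connected_Compl_if_segments_to_zero[OF assms(1-3)] assms(4)
    by (intro inside_subset[of "- K"]) auto
  thus ?thesis using assms(4) by blast
qed

lemma subset_inside_if_frontier_subset:
  fixes U C :: "'a::real_normed_vector set"
  assumes "bounded U" "frontier U \<subseteq> C"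
  shows "U \<subseteq> C \<union> inside C"
proof
  fix z assume "z \<in> U"
  show "z \<in> C \<union> inside C"
  proof (cases "z \<in> C")
    case False
    let ?S = "connected_component_set (- C) z"
    have "?S \<subseteq> U"
    proof (rule ccontr)
      assume "\<not> ?S \<subseteq> U"
      moreover have "z \<in> ?S" using False by simp
      ultimately have "?S \<inter> frontier U \<noteq> {}"
        using connected_Int_frontier[of ?S U] \<open>z \<in> U\<close> by blast
      thus False using connected_component_subset[of "- C" z] assms(2) by blast
    qed
    hence "bounded ?S" using assms(1) bounded_subset by blast
    thus ?thesis unfolding inside_def using False by simp
  qed simp
qed

section \<open>Parabolic regions\<close>

definition parabolic_region :: "real \<Rightarrow> real \<Rightarrow> (real \<times> real) set" where
  "parabolic_region a t = {(x, y). y \<le> 0 \<and> 0 \<le> x \<and> sqrt (a * x) + sqrt (- y) \<le> t}"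

lemma Rinf_eq_parabolic_region: "Rinf p = parabolic_region (1 - p) ((6 * (1 - p)) powr (1/4))"
  unfolding Rinf_def parabolic_region_def ..

lemma mem_parabolic_regionI:
  assumes "a > 0" "0 \<le> x" "x \<le> x'" "y' \<le> y" "y \<le> 0" "sqrt (a * x') + sqrt (- y') \<le> t"
  shows "(x, y) \<in> parabolic_region a t"
proof -
  have "sqrt (a * x) \<le> sqrt (a * x')" using assms by (intro real_sqrt_le_mono mult_left_mono) auto
  moreover have "sqrt (- y) \<le> sqrt (- y')" using assms by simp
  ultimately have "sqrt (a * x) + sqrt (- y) \<le> t" using assms(6) by linarith
  thus ?thesis using assms unfolding parabolic_region_def by simp
qed

lemma parabolic_region_mono: "t \<le> t' \<Longrightarrow> parabolic_region a t \<subseteq> parabolic_region a t'"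
  by (auto simp: parabolic_region_def)

lemma zero_mem_parabolic_region: "0 \<le> t \<Longrightarrow> 0 \<in> parabolic_region a t"
  by (auto simp: parabolic_region_def zero_prod_def)

lemma nonneg_if_mem_parabolic_region:
  assumes "a \<ge> 0" "z \<in> parabolic_region a t"
  shows "0 \<le> t"
proof -
  obtain x y where "y \<le> 0" "0 \<le> x" "sqrt (a * x) + sqrt (- y) \<le> t"
    using assms(2) by (auto simp: parabolic_region_def)
  moreover have "sqrt (a * x) \<ge> 0" "sqrt (- y) \<ge> 0" using calculation assms(1) by simp_all
  ultimately show "0 \<le> t" by linarith
qed

lemma closed_parabolic_region: "closed (parabolic_region a t)"
proof -
  have "parabolic_region a t =
      {z. snd z \<le> 0} \<inter> {z. 0 \<le> fst z} \<inter> {z. sqrt (a * fst z) + sqrt (- snd z) \<le> t}"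
    by (auto simp: parabolic_region_def)
  also have "closed \<dots>"
    by (intro closed_Int closed_Collect_le continuous_intros)
  finally show ?thesis .
qed

lemma norm_le_if_mem_parabolic_region:
  assumes "a > 0" "z \<in> parabolic_region a t"
  shows "norm z \<le> t\<^sup>2 / a + t\<^sup>2"
proof -
  obtain x y where z: "z = (x, y)" "y \<le> 0" "0 \<le> x" "sqrt (a * x) + sqrt (- y) \<le> t"
    using assms(2) by (auto simp: parabolic_region_def)
  have "sqrt (a * x) \<ge> 0" "sqrt (- y) \<ge> 0" using z assms by auto
  hence "sqrt (a * x) \<le> t" "sqrt (- y) \<le> t" using z by linarith+
  hence "a * x \<le> t\<^sup>2" "- y \<le> t\<^sup>2" by (auto dest: sqrt_le_D)
  hence "x \<le> t\<^sup>2 / a" "- y \<le> t\<^sup>2" using assms by (simp_all add: pos_le_divide_eq mult.commute)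
  moreover have "norm z \<le> \<bar>x\<bar> + \<bar>y\<bar>" using z norm_Pair_le[of x y] by simp
  ultimately show ?thesis using z by simp
qed

lemma bounded_parabolic_region: "a > 0 \<Longrightarrow> bounded (parabolic_region a t)"
  using norm_le_if_mem_parabolic_region unfolding bounded_iff by blast

lemma compact_parabolic_region: "a > 0 \<Longrightarrow> compact (parabolic_region a t)"
  by (simp add: compact_eq_bounded_closed bounded_parabolic_region closed_parabolic_region)

lemma scaleR_mem_parabolic_region:
  assumes "z \<in> parabolic_region a t" "s \<ge> 0"
  shows "s *\<^sub>R z \<in> parabolic_region a (sqrt s * t)"
proof -
  obtain x y where z: "z = (x, y)" "y \<le> 0" "0 \<le> x" "sqrt (a * x) + sqrt (- y) \<le> t"
    using assms(1) by (auto simp: parabolic_region_def)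
  have "sqrt (a * (s * x)) + sqrt (- (s * y)) = sqrt s * (sqrt (a * x) + sqrt (- y))"
    using real_sqrt_mult[of s "- y"] real_sqrt_mult[of a "s * x"] real_sqrt_mult[of s "a * x"]
    by (simp add: algebra_simps)
  also have "\<dots> \<le> sqrt s * t" using z(4) assms(2) by (intro mult_left_mono) auto
  finally show ?thesis using z assms(2) by (auto simp: parabolic_region_def mult_nonneg_nonpos)
qed

lemma scaleR_image_parabolic_region:
  assumes "s > 0"
  shows "(\<lambda>z. s *\<^sub>R z) ` parabolic_region a t = parabolic_region a (sqrt s * t)"
proof
  show "(\<lambda>z. s *\<^sub>R z) ` parabolic_region a t \<subseteq> parabolic_region a (sqrt s * t)"
    using scaleR_mem_parabolic_region assms by auto
  show "parabolic_region a (sqrt s * t) \<subseteq> (\<lambda>z. s *\<^sub>R z) ` parabolic_region a t"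
  proof
    fix w assume "w \<in> parabolic_region a (sqrt s * t)"
    hence "(1 / s) *\<^sub>R w \<in> parabolic_region a (sqrt (1 / s) * (sqrt s * t))"
      using scaleR_mem_parabolic_region assms by simp
    also have "sqrt (1 / s) * (sqrt s * t) = t" using assms by (simp add: real_sqrt_divide)
    finally show "w \<in> (\<lambda>z. s *\<^sub>R z) ` parabolic_region a t"
      using assms by (intro image_eqI[of w _ "(1 / s) *\<^sub>R w"]) auto
  qed
qed

lemma vimage_Pair_parabolic_region:
  assumes "a > 0" "t \<ge> 0"
  shows "Pair x -` parabolic_region a t =
    (if 0 \<le> x \<and> x \<le> t\<^sup>2 / a then {- (t - sqrt (a * x))\<^sup>2 .. 0} else {})"
proof (cases "0 \<le> x \<and> x \<le> t\<^sup>2 / a")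
  case True
  hence "a * x \<le> t\<^sup>2" using assms by (simp add: pos_le_divide_eq mult.commute)
  hence st: "sqrt (a * x) \<le> t" using assms real_le_lsqrt by blast
  have "y \<le> 0 \<and> sqrt (a * x) + sqrt (- y) \<le> t \<longleftrightarrow> - (t - sqrt (a * x))\<^sup>2 \<le> y \<and> y \<le> 0" for y
  proof -
    have "sqrt (- y) \<le> t - sqrt (a * x) \<Longrightarrow> - y \<le> (t - sqrt (a * x))\<^sup>2" by (rule sqrt_le_D)
    moreover have "- y \<le> (t - sqrt (a * x))\<^sup>2 \<Longrightarrow> sqrt (- y) \<le> t - sqrt (a * x)"
      by (rule real_le_lsqrt) (use st in simp_all)
    ultimately show ?thesis by linarith
  qed
  hence "y \<in> Pair x -` parabolic_region a t \<longleftrightarrow> y \<in> {- (t - sqrt (a * x))\<^sup>2 .. 0}" for y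
    using True unfolding parabolic_region_def by simp
  thus ?thesis using True by (simp add: set_eq_iff)
next
  case False
  have False if "(x, y) \<in> parabolic_region a t" for y
  proof -
    have "0 \<le> x" "sqrt (a * x) + sqrt (- y) \<le> t" "y \<le> 0"
      using that unfolding parabolic_region_def by simp_all
    hence "0 \<le> x" "sqrt (a * x) \<le> t" using real_sqrt_ge_zero[of "- y"] by linarith+
    hence "0 \<le> x" "a * x \<le> t\<^sup>2" by (auto dest: sqrt_le_D)
    thus False using False assms by (simp add: pos_le_divide_eq mult.commute)
  qed
  thus ?thesis using False by auto
qed

lemma has_integral_parabolic_depth:
  assumes "a > 0" "t \<ge> 0"
  shows "((\<lambda>x. (t - sqrt (a * x))\<^sup>2) has_integral t ^ 4 / (6 * a)) {0 .. t\<^sup>2 / a}"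
proof -
  define G where "G x = t\<^sup>2 * x - (4/3) * t * sqrt a * (x * sqrt x) + a * x\<^sup>2 / 2" for x
  have "((\<lambda>x. (t - sqrt (a * x))\<^sup>2) has_integral G (t\<^sup>2 / a) - G 0) {0 .. t\<^sup>2 / a}"
  proof (rule fundamental_theorem_of_calculus_interior)
    show "0 \<le> t\<^sup>2 / a" using assms by simp
    show "continuous_on {0 .. t\<^sup>2 / a} G" unfolding G_def by (intro continuous_intros) auto
    fix x assume x: "x \<in> {0 <..< t\<^sup>2 / a}"
    have "(G has_real_derivative
        t\<^sup>2 - (4/3) * t * sqrt a * (sqrt x + x * (inverse (sqrt x) / 2)) + a * x) (at x)"
      unfolding G_def using x by (auto intro!: derivative_eq_intros)
    moreover have "t\<^sup>2 - (4/3) * t * sqrt a * (sqrt x + x * (inverse (sqrt x) / 2)) + a * x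
        = (t - sqrt (a * x))\<^sup>2"
    proof -
      have sx: "sqrt x > 0" using x by auto
      have xx: "x = sqrt x * sqrt x" using x by simp
      have "x * (inverse (sqrt x) / 2) = sqrt x / 2" using sx by (subst xx) (simp add: field_simps)
      moreover have "sqrt (a * x) = sqrt a * sqrt x" by (simp add: real_sqrt_mult)
      moreover have "a = sqrt a * sqrt a" "x = sqrt x * sqrt x" using assms x by simp_all
      ultimately show ?thesis by (simp add: power2_eq_square algebra_simps)
    qed
    ultimately show "(G has_vector_derivative (t - sqrt (a * x))\<^sup>2) (at x)"
      by (simp add: has_real_derivative_iff_has_vector_derivative)
  qed
  moreover have "G (t\<^sup>2 / a) - G 0 = t ^ 4 / (6 * a)"
  proof -
    have "sqrt (t\<^sup>2 / a) = t / sqrt a" using assms by (simp add: real_sqrt_divide)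
    moreover have "a = sqrt a * sqrt a" using assms by simp
    ultimately have "sqrt a * (t\<^sup>2 / a * sqrt (t\<^sup>2 / a)) = t ^ 3 / a"
      using assms by (simp add: field_simps power2_eq_square power3_eq_cube)
    hence "G (t\<^sup>2 / a) = t\<^sup>2 * (t\<^sup>2 / a) - (4/3) * t * (t ^ 3 / a) + a * (t\<^sup>2 / a)\<^sup>2 / 2"
      unfolding G_def by (metis mult.assoc)
    also have "\<dots> = t ^ 4 / a - (4/3) * t ^ 4 / a + t ^ 4 / (2 * a)"
      using assms by (simp add: field_simps power2_eq_square power3_eq_cube power4_eq_xxxx)
    finally show ?thesis unfolding G_def by (simp add: field_simps)
  qed
  ultimately show ?thesis by simp
qed

lemma parabolic_region_lmeasurable: "a > 0 \<Longrightarrow> parabolic_region a t \<in> lmeasurable"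
  by (simp add: lmeasurable_compact compact_parabolic_region)

lemma measure_parabolic_region:
  assumes "a > 0" "t \<ge> 0"
  shows "measure lebesgue (parabolic_region a t) = t ^ 4 / (6 * a)"
proof -
  let ?K = "parabolic_region a t"
  have borel: "?K \<in> sets lborel" using closed_parabolic_region by simp
  have "emeasure lborel ?K = emeasure (lborel \<Otimes>\<^sub>M lborel) ?K"
    by (simp only: lborel_prod)
  also have "\<dots> = (\<integral>\<^sup>+x. emeasure lborel (Pair x -` ?K) \<partial>lborel)"
    by (rule lborel.emeasure_pair_measure_alt) (subst lborel_prod, rule borel)
  also have "\<dots> = (\<integral>\<^sup>+x. ennreal ((t - sqrt (a * x))\<^sup>2) * indicator {0 .. t\<^sup>2 / a} x \<partial>lborel)"
    by (rule nn_integral_cong) (simp add: vimage_Pair_parabolic_region[OF assms] indicator_def)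
  also have "\<dots> = ennreal (t ^ 4 / (6 * a))"
    by (rule nn_integral_has_integral_lebesgue'[OF _ has_integral_parabolic_depth[OF assms]]) simp
  finally have "measure lborel ?K = t ^ 4 / (6 * a)"
    using assms by (intro measure_eq_emeasure_eq_ennreal) auto
  thus ?thesis using borel by simp
qed

lemma infdist_parabolic_region_le:
  assumes "a > 0" "z \<in> parabolic_region a b" "0 \<le> c"
  shows "infdist z (parabolic_region a c) \<le> (1 + 1 / a) * \<bar>b\<^sup>2 - c\<^sup>2\<bar>"
proof (cases "b \<le> c")
  case True
  hence "infdist z (parabolic_region a c) = 0"
    using assms parabolic_region_mono by (metis infdist_zero subsetD)
  thus ?thesis using assms by simp
next
  case False
  have b: "b > 0" using False assms by linarith
  define k where "k = (c / b)\<^sup>2"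
  have k: "0 \<le> k" "k \<le> 1" using False b assms
    unfolding k_def by (auto simp: power_le_one divide_le_eq)
  have "sqrt k * b = c" unfolding k_def using b assms by (simp add: real_sqrt_divide)
  hence "k *\<^sub>R z \<in> parabolic_region a c" using scaleR_mem_parabolic_region[OF assms(2) k(1)] by simp
  hence "infdist z (parabolic_region a c) \<le> dist z (k *\<^sub>R z)" by (rule infdist_le)
  also have "dist z (k *\<^sub>R z) = norm ((1 - k) *\<^sub>R z)" by (simp add: dist_norm algebra_simps)
  also have "\<dots> = (1 - k) * norm z" using k by simp
  also have "\<dots> \<le> (1 - k) * (b\<^sup>2 / a + b\<^sup>2)"
    using norm_le_if_mem_parabolic_region[OF assms(1,2)] k by (intro mult_left_mono) auto
  also have "\<dots> = (1 + 1 / a) * (b\<^sup>2 - c\<^sup>2)"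
    unfolding k_def using b assms by (simp add: field_simps power2_eq_square)
  finally show ?thesis using False assms by simp
qed

lemma hausdorff_dist_parabolic_region_le:
  assumes "a > 0" "0 \<le> \<alpha>" "0 \<le> c"
    and "parabolic_region a \<alpha> \<subseteq> S" "S \<subseteq> parabolic_region a \<beta>"
  shows "\<bar>hausdorff_dist S (parabolic_region a c)\<bar> \<le> (1 + 1 / a) * (\<bar>\<beta>\<^sup>2 - c\<^sup>2\<bar> + \<bar>\<alpha>\<^sup>2 - c\<^sup>2\<bar>)"
proof -
  let ?K = "parabolic_region a" and ?B = "(1 + 1 / a) * (\<bar>\<beta>\<^sup>2 - c\<^sup>2\<bar> + \<bar>\<alpha>\<^sup>2 - c\<^sup>2\<bar>)"
  have "0 \<in> S" using assms zero_mem_parabolic_region by blast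
  have "0 \<in> ?K c" using assms zero_mem_parabolic_region by blast
  have "0 \<le> 1 + 1 / a" using assms by simp
  have S_to_K: "infdist z (?K c) \<le> ?B" if "z \<in> S" for z
  proof -
    have "infdist z (?K c) \<le> (1 + 1 / a) * \<bar>\<beta>\<^sup>2 - c\<^sup>2\<bar>"
      using that assms by (intro infdist_parabolic_region_le) auto
    also have "\<dots> \<le> ?B" using \<open>0 \<le> 1 + 1 / a\<close> by (intro mult_left_mono) auto
    finally show ?thesis .
  qed
  have "infdist w S \<le> ?B" if "w \<in> ?K c" for w
  proof -
    have "infdist w S \<le> infdist w (?K \<alpha>)"
      using assms zero_mem_parabolic_region[of \<alpha> a] by (intro infdist_mono) auto
    also have "\<dots> \<le> (1 + 1 / a) * \<bar>c\<^sup>2 - \<alpha>\<^sup>2\<bar>"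
      using that assms by (intro infdist_parabolic_region_le) auto
    also have "\<dots> \<le> ?B" using \<open>0 \<le> 1 + 1 / a\<close> by (intro mult_left_mono) auto
    finally show ?thesis .
  qed
  hence "hausdorff_dist S (?K c) \<le> ?B"
    using S_to_K \<open>0 \<in> S\<close> \<open>0 \<in> ?K c\<close> by (intro hausdorff_dist_le) auto
  moreover have "0 \<le> hausdorff_dist S (?K c)"
    using \<open>0 \<in> S\<close> S_to_K by (rule hausdorff_dist_nonneg)
  ultimately show ?thesis by simp
qed

lemma hausdorff_dist_parabolic_region_tendsto:
  assumes "a > 0" "0 \<le> c" "\<alpha> \<longlonglongrightarrow> c" "\<beta> \<longlonglongrightarrow> c"
    and "\<forall>\<^sub>F n in sequentially.
           0 \<le> \<alpha> n \<and> parabolic_region a (\<alpha> n) \<subseteq> S n \<and> S n \<subseteq> parabolic_region a (\<beta> n)"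
  shows "(\<lambda>n. hausdorff_dist (S n) (parabolic_region a c)) \<longlonglongrightarrow> 0"
proof (rule Lim_null_comparison)
  show "\<forall>\<^sub>F n in sequentially. norm (hausdorff_dist (S n) (parabolic_region a c))
      \<le> (1 + 1 / a) * (\<bar>(\<beta> n)\<^sup>2 - c\<^sup>2\<bar> + \<bar>(\<alpha> n)\<^sup>2 - c\<^sup>2\<bar>)"
    using assms(5) by eventually_elim (use assms(1,2) hausdorff_dist_parabolic_region_le in auto)
  have "(\<lambda>n. (1 + 1 / a) * (\<bar>(\<beta> n)\<^sup>2 - c\<^sup>2\<bar> + \<bar>(\<alpha> n)\<^sup>2 - c\<^sup>2\<bar>))
      \<longlonglongrightarrow> (1 + 1 / a) * (\<bar>c\<^sup>2 - c\<^sup>2\<bar> + \<bar>c\<^sup>2 - c\<^sup>2\<bar>)"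
    by (intro tendsto_intros assms(3,4))
  thus "(\<lambda>n. (1 + 1 / a) * (\<bar>(\<beta> n)\<^sup>2 - c\<^sup>2\<bar> + \<bar>(\<alpha> n)\<^sup>2 - c\<^sup>2\<bar>)) \<longlonglongrightarrow> 0" by simp
qed

lemma segment_to_zero_parabolic_region:
  assumes "a \<ge> 0" "z \<in> parabolic_region a t"
  shows "closed_segment 0 z \<subseteq> parabolic_region a t"
proof
  fix w assume "w \<in> closed_segment 0 z"
  then obtain u where u: "0 \<le> u" "u \<le> 1" "w = u *\<^sub>R z" by (auto simp: in_segment)
  have "0 \<le> t" using assms by (rule nonneg_if_mem_parabolic_region)
  have "w \<in> parabolic_region a (sqrt u * t)" using scaleR_mem_parabolic_region[OF assms(2) u(1)] u(3) by simp
  moreover have "sqrt u * t \<le> t" using u \<open>0 \<le> t\<close> by (simp add: mult_left_le_one_le)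
  ultimately show "w \<in> parabolic_region a t" using parabolic_region_mono by blast
qed

lemma inside_subset_parabolic_region:
  assumes "a > 0" "C \<subseteq> parabolic_region a t"
  shows "C \<union> inside C \<subseteq> parabolic_region a t"
  using assms bounded_parabolic_region segment_to_zero_parabolic_region[of a]
  by (intro inside_subset_if_segments_to_zero) auto

section \<open>Concave polygonal chains\<close>

text \<open>The chain r_1, ..., r_n of a strictly decreasing vector, with d k = h(k) > 0: the edge
  from r_k to r_(k+1) has direction (k, n - k), so the slopes (n - k) / k decrease and the chain
  is the graph of a concave function.\<close>
locale concave_chain =
  fixes n :: nat and X Y d :: "nat \<Rightarrow> real"
  assumes two_le_n: "2 \<le> n"
    and X_1: "X 1 = 0" and Y_n: "Y n = 0"
    and X_Suc: "\<And>k. 1 \<le> k \<Longrightarrow> k < n \<Longrightarrow> X (Suc k) - X k = real k * d k"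
    and Y_Suc: "\<And>k. 1 \<le> k \<Longrightarrow> k < n \<Longrightarrow> Y (Suc k) - Y k = (real n - real k) * d k"
    and d_pos: "\<And>k. 1 \<le> k \<Longrightarrow> k < n \<Longrightarrow> 0 < d k"
begin

definition vertex :: "nat \<Rightarrow> real \<times> real" where
  "vertex k = (X k, Y k)"

definition curve :: "(real \<times> real) set" where
  "curve = closed_segment 0 (vertex 1) \<union> (\<Union>k\<in>{1..<n}. closed_segment (vertex k) (vertex (k + 1)))
     \<union> closed_segment (vertex n) 0"

definition edge_line :: "nat \<Rightarrow> real \<Rightarrow> real" where
  "edge_line k x = Y k + (real n - real k) / real k * (x - X k)"

text \<open>The region between the chain and the x-axis; by concavity a point of the strip lies
  above the chain iff it lies above some edge line.\<close>
definition upper_region :: "(real \<times> real) set" where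
  "upper_region = {z. 0 \<le> fst z \<and> fst z \<le> X n \<and> snd z \<le> 0 \<and> (\<exists>k\<in>{1..<n}. edge_line k (fst z) \<le> snd z)}"

lemma X_less_Suc:
  assumes "1 \<le> k" "k < n"
  shows "X k < X (Suc k)"
proof -
  have "0 < real k * d k" using assms d_pos[OF assms] by simp
  thus ?thesis using X_Suc[OF assms] by simp
qed

lemma Y_less_Suc:
  assumes "1 \<le> k" "k < n"
  shows "Y k < Y (Suc k)"
proof -
  have "0 < (real n - real k) * d k" using assms d_pos[OF assms] by simp
  thus ?thesis using Y_Suc[OF assms] by simp
qed

lemma X_mono:
  assumes "1 \<le> i" "i \<le> j" "j \<le> n"
  shows "X i \<le> X j"
  using assms(2,3)
proof (induction j rule: dec_induct)
  case (step j) thus ?case using X_less_Suc[of j] assms(1) by fastforce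
qed simp

lemma Y_mono:
  assumes "1 \<le> i" "i \<le> j" "j \<le> n"
  shows "Y i \<le> Y j"
  using assms(2,3)
proof (induction j rule: dec_induct)
  case (step j) thus ?case using Y_less_Suc[of j] assms(1) by fastforce
qed simp

lemma X_strict_mono: "1 \<le> i \<Longrightarrow> i < j \<Longrightarrow> j \<le> n \<Longrightarrow> X i < X j"
  using X_less_Suc[of i] X_mono[of "Suc i" j] by fastforce

lemma X_nonneg: "1 \<le> k \<Longrightarrow> k \<le> n \<Longrightarrow> 0 \<le> X k"
  using X_mono[of 1 k] X_1 by simp

lemma Y_nonpos: "1 \<le> k \<Longrightarrow> k \<le> n \<Longrightarrow> Y k \<le> 0"
  using Y_mono[of k n] Y_n by simp

lemma X_n_pos: "0 < X n"
  using X_strict_mono[of 1 n] two_le_n X_1 by simp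

lemma Y_1_neg: "Y 1 < 0"
  using Y_less_Suc[of 1] Y_mono[of 2 n] two_le_n Y_n by (simp add: numeral_2_eq_2)

lemma obtain_edge:
  assumes "0 \<le> x" "x \<le> X n"
  obtains j where "1 \<le> j" "j < n" "X j \<le> x" "x \<le> X (Suc j)"
proof -
  define S where "S = {k\<in>{1..<n}. X k \<le> x}"
  have "finite S" "1 \<in> S" unfolding S_def using two_le_n X_1 assms by auto
  define j where "j = Max S"
  have "j \<in> S" unfolding j_def using \<open>finite S\<close> \<open>1 \<in> S\<close> by (intro Max_in) auto
  hence j: "1 \<le> j" "j < n" "X j \<le> x" unfolding S_def by auto
  have "x \<le> X (Suc j)"
  proof (cases "Suc j < n")
    case True
    have "Suc j \<notin> S" using Max_ge[OF \<open>finite S\<close>, of "Suc j"] unfolding j_def[symmetric] by auto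
    thus ?thesis using True j unfolding S_def by auto
  next
    case False
    hence "Suc j = n" using j by simp
    thus ?thesis using assms by simp
  qed
  thus ?thesis using j that by blast
qed

lemma edge_line_at_next_vertex: "1 \<le> k \<Longrightarrow> k < n \<Longrightarrow> edge_line k (X (Suc k)) = Y (Suc k)"
  unfolding edge_line_def using X_Suc[of k] Y_Suc[of k] by simp

lemma edge_line_diff:
  assumes "1 \<le> k" "k < n"
  shows "edge_line k x - edge_line (Suc k) x =
    ((real n - real k) / real k - (real n - real (Suc k)) / real (Suc k)) * (x - X (Suc k))"
proof -
  define s where "s = (real n - real k) / real k"
  have line: "edge_line k y = Y k + s * (y - X k)" for y unfolding edge_line_def s_def ..
  have "edge_line k x = edge_line k (X (Suc k)) + s * (x - X (Suc k))"
    unfolding line by (simp add: algebra_simps)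
  also have "edge_line k (X (Suc k)) = Y (Suc k)" by (rule edge_line_at_next_vertex[OF assms])
  finally show ?thesis unfolding edge_line_def[of "Suc k"] s_def by (simp add: algebra_simps)
qed

lemma edge_slope_diff_nonneg:
  assumes "1 \<le> k"
  shows "0 \<le> (real n - real k) / real k - (real n - real (Suc k)) / real (Suc k)"
proof -
  have "real n / real (Suc k) \<le> real n / real k" using assms by (intro divide_left_mono) auto
  thus ?thesis using assms by (simp add: diff_divide_distrib)
qed

lemma edge_line_antimono_right:
  assumes "1 \<le> k" "k \<le> j" "j < n" "X j \<le> x"
  shows "edge_line j x \<le> edge_line k x"
  using assms(2,1)
proof (induction k rule: inc_induct)
  case (step k)
  have "X (Suc k) \<le> X j" using step assms by (intro X_mono) auto
  hence "0 \<le> ((real n - real k) / real k - (real n - real (Suc k)) / real (Suc k)) * (x - X (Suc k))"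
    using edge_slope_diff_nonneg[of k] step assms by (intro mult_nonneg_nonneg) auto
  thus ?case using edge_line_diff[of k x] step assms by fastforce
qed simp

lemma edge_line_mono_left:
  assumes "1 \<le> j" "j \<le> k" "k < n" "x \<le> X (Suc j)"
  shows "edge_line j x \<le> edge_line k x"
  using assms(2,3)
proof (induction k rule: dec_induct)
  case (step k)
  have "X (Suc j) \<le> X (Suc k)" using step assms by (intro X_mono) auto
  hence "((real n - real k) / real k - (real n - real (Suc k)) / real (Suc k)) * (x - X (Suc k)) \<le> 0"
    using edge_slope_diff_nonneg[of k] step assms by (intro mult_nonneg_nonpos) auto
  thus ?case using edge_line_diff[of k x] step assms by fastforce
qed simp

lemma edge_line_min:
  assumes "1 \<le> j" "j < n" "X j \<le> x" "x \<le> X (Suc j)" "1 \<le> k" "k < n"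
  shows "edge_line j x \<le> edge_line k x"
  using edge_line_antimono_right[of k j x] edge_line_mono_left[of j k x] assms by (cases "k \<le> j") auto

lemma edge_point:
  assumes "1 \<le> j" "j < n" "X j \<le> x" "x \<le> X (Suc j)"
  defines "u \<equiv> (x - X j) / (X (Suc j) - X j)"
  shows "0 \<le> u" "u \<le> 1" "x = (1 - u) * X j + u * X (Suc j)"
    "edge_line j x = (1 - u) * Y j + u * Y (Suc j)"
    "(x, edge_line j x) \<in> closed_segment (vertex j) (vertex (Suc j))"
proof -
  have pos: "0 < X (Suc j) - X j" using X_less_Suc[OF assms(1,2)] by simp
  have slope: "(real n - real j) / real j = (Y (Suc j) - Y j) / (X (Suc j) - X j)"
    using X_Suc[OF assms(1,2)] Y_Suc[OF assms(1,2)] d_pos[OF assms(1,2)] assms by simp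
  show "0 \<le> u" "u \<le> 1" unfolding u_def using pos assms by auto
  have "u * (X (Suc j) - X j) = x - X j" unfolding u_def using pos by simp
  thus x: "x = (1 - u) * X j + u * X (Suc j)" by (simp add: algebra_simps)
  have "edge_line j x = Y j + u * (Y (Suc j) - Y j)" unfolding edge_line_def slope u_def by simp
  thus y: "edge_line j x = (1 - u) * Y j + u * Y (Suc j)" by (simp add: algebra_simps)
  show "(x, edge_line j x) \<in> closed_segment (vertex j) (vertex (Suc j))"
    unfolding in_segment vertex_def using \<open>0 \<le> u\<close> \<open>u \<le> 1\<close>
    by (intro conjI exI[of _ u]) (simp_all flip: x y)
qed

lemma Y_1_le_edge_line:
  assumes "1 \<le> j" "j < n" "X j \<le> x" "x \<le> X (Suc j)"
  shows "Y 1 \<le> edge_line j x"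
proof -
  have "Y 1 \<le> Y j" using assms by (intro Y_mono) auto
  also have "Y j \<le> edge_line j x" unfolding edge_point(4)[OF assms]
    by (rule convex_comb_between) (use edge_point(1,2)[OF assms] Y_less_Suc[OF assms(1,2)] in auto)
  finally show ?thesis .
qed

lemma upper_region_edge:
  assumes "z \<in> upper_region"
  obtains j where "1 \<le> j" "j < n" "X j \<le> fst z" "fst z \<le> X (Suc j)" "edge_line j (fst z) \<le> snd z"
proof -
  obtain k where k: "k \<in> {1..<n}" "edge_line k (fst z) \<le> snd z" and x: "0 \<le> fst z" "fst z \<le> X n"
    using assms unfolding upper_region_def by auto
  obtain j where j: "1 \<le> j" "j < n" "X j \<le> fst z" "fst z \<le> X (Suc j)"
    using obtain_edge[OF x] by blast
  have "edge_line j (fst z) \<le> snd z" using edge_line_min[OF j] k by fastforce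
  thus ?thesis using that j by blast
qed

lemma bounded_upper_region: "bounded upper_region"
proof -
  have "upper_region \<subseteq> cbox (0, Y 1) (X n, 0)"
  proof
    fix z assume z: "z \<in> upper_region"
    then obtain j where j: "1 \<le> j" "j < n" "X j \<le> fst z" "fst z \<le> X (Suc j)"
      "edge_line j (fst z) \<le> snd z" by (rule upper_region_edge)
    have "Y 1 \<le> edge_line j (fst z)" by (rule Y_1_le_edge_line[OF j(1-4)])
    thus "z \<in> cbox (0, Y 1) (X n, 0)"
      using z j unfolding upper_region_def by (cases z) (auto simp: cbox_Pair_eq)
  qed
  thus ?thesis using bounded_cbox bounded_subset by blast
qed

lemma closed_upper_region: "closed upper_region"
proof -
  have "upper_region = (\<Union>k\<in>{1..<n}.
      {z. 0 \<le> fst z} \<inter> {z. fst z \<le> X n} \<inter> {z. snd z \<le> 0} \<inter> {z. edge_line k (fst z) \<le> snd z})"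
    unfolding upper_region_def by auto
  also have "closed \<dots>" unfolding edge_line_def
    by (intro closed_UN finite_atLeastLessThan ballI closed_Int closed_Collect_le continuous_intros)
  finally show ?thesis .
qed

lemma mem_curve_x_axis:
  assumes "0 \<le> x" "x \<le> X n"
  shows "(x, 0) \<in> curve"
proof -
  define u where "u = 1 - x / X n"
  have "0 \<le> u" "u \<le> 1" unfolding u_def using assms X_n_pos by auto
  moreover have "(x, 0) = (1 - u) *\<^sub>R vertex n + u *\<^sub>R 0"
    unfolding u_def vertex_def using X_n_pos Y_n by simp
  ultimately have "(x, 0) \<in> closed_segment (vertex n) 0" unfolding in_segment by blast
  thus ?thesis unfolding curve_def by blast
qed

lemma mem_curve_y_axis:
  assumes "Y 1 \<le> y" "y \<le> 0"
  shows "(0, y) \<in> curve"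
proof -
  define u where "u = y / Y 1"
  have "0 \<le> u" "u \<le> 1" unfolding u_def using Y_1_neg assms
    by (auto simp: divide_le_eq_1 zero_le_divide_iff)
  moreover have "(0, y) = (1 - u) *\<^sub>R 0 + u *\<^sub>R vertex 1"
    unfolding u_def vertex_def using X_1 Y_1_neg by simp
  ultimately have "(0, y) \<in> closed_segment 0 (vertex 1)" unfolding in_segment by blast
  thus ?thesis unfolding curve_def by blast
qed

lemma upper_region_off_curve:
  assumes "z \<in> upper_region" "z \<notin> curve"
  shows "0 < fst z \<and> fst z < X n \<and> snd z < 0 \<and> (\<exists>k\<in>{1..<n}. edge_line k (fst z) < snd z)"
proof -
  obtain x y where z: "z = (x, y)" by fastforce
  have strip: "0 \<le> x" "x \<le> X n" "y \<le> 0" using assms(1) z unfolding upper_region_def by auto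
  obtain j where j: "1 \<le> j" "j < n" "X j \<le> x" "x \<le> X (Suc j)" "edge_line j x \<le> y"
    using upper_region_edge[OF assms(1)] z by auto
  have "y \<noteq> 0" using mem_curve_x_axis strip assms(2) z by blast
  moreover have "Y 1 \<le> y" using Y_1_le_edge_line[OF j(1-4)] j by linarith
  hence "x \<noteq> 0" using mem_curve_y_axis strip assms(2) z by blast
  moreover have "x \<noteq> X n"
  proof
    assume "x = X n"
    have "Suc j = n"
      using X_strict_mono[of "Suc j" n] j \<open>x = X n\<close> by (cases "Suc j = n") auto
    hence "edge_line j x = 0" using edge_line_at_next_vertex[OF j(1,2)] \<open>x = X n\<close> Y_n by simp
    thus False using j strip \<open>y \<noteq> 0\<close> by simp
  qed
  moreover have "edge_line j x \<noteq> y"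
  proof
    assume "edge_line j x = y"
    hence "z \<in> closed_segment (vertex j) (vertex (Suc j))" using edge_point(5)[OF j(1-4)] z by simp
    thus False using assms(2) j unfolding curve_def by auto
  qed
  moreover have "edge_line j x < y" using j \<open>edge_line j x \<noteq> y\<close> by simp
  ultimately show ?thesis using strip j z by fastforce
qed

lemma frontier_upper_region_subset: "frontier upper_region \<subseteq> curve"
proof -
  define W where
    "W = {z. 0 < fst z \<and> fst z < X n \<and> snd z < 0 \<and> (\<exists>k\<in>{1..<n}. edge_line k (fst z) < snd z)}"
  have "W = (\<Union>k\<in>{1..<n}.
      {z. 0 < fst z} \<inter> {z. fst z < X n} \<inter> {z. snd z < 0} \<inter> {z. edge_line k (fst z) < snd z})"
    unfolding W_def by auto
  hence "open W" unfolding edge_line_def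
    by (auto intro!: open_UN open_Int open_Collect_less continuous_intros)
  moreover have "W \<subseteq> upper_region" unfolding W_def upper_region_def by force
  ultimately have "W \<subseteq> interior upper_region" by (rule interior_maximal[rotated])
  hence "frontier upper_region \<subseteq> upper_region - W"
    unfolding frontier_def using closed_upper_region closure_closed by auto
  also have "\<dots> \<subseteq> curve" using upper_region_off_curve unfolding W_def by blast
  finally show ?thesis .
qed

lemma upper_region_subset_inside: "upper_region \<subseteq> curve \<union> inside curve"
  by (rule subset_inside_if_frontier_subset[OF bounded_upper_region frontier_upper_region_subset])

text \<open>Along each edge the function sqrt (a x) + sqrt (- y) is concave, so a lower bound m at the
  vertices holds on the whole chain, and points of the parabolic region lie above it.\<close>
lemma parabolic_region_subset_upper_region:
  assumes "0 < a" and lower: "\<And>k. 1 \<le> k \<Longrightarrow> k \<le> n \<Longrightarrow> m \<le> sqrt (a * X k) + sqrt (- Y k)"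
  shows "parabolic_region a m \<subseteq> upper_region"
proof
  fix z assume "z \<in> parabolic_region a m"
  then obtain x y where z: "z = (x, y)" "y \<le> 0" "0 \<le> x" "sqrt (a * x) + sqrt (- y) \<le> m"
    by (auto simp: parabolic_region_def)
  have "m \<le> sqrt (a * X n)" using lower[of n] two_le_n Y_n by simp
  hence "sqrt (a * x) \<le> sqrt (a * X n)" using z(2,4) real_sqrt_ge_zero[of "- y"] by linarith
  hence "x \<le> X n" using assms(1) by simp
  then obtain j where j: "1 \<le> j" "j < n" "X j \<le> x" "x \<le> X (Suc j)"
    using obtain_edge[OF z(3)] by blast
  obtain u where u: "0 \<le> u" "u \<le> 1" "x = (1 - u) * X j + u * X (Suc j)"
    "edge_line j x = (1 - u) * Y j + u * Y (Suc j)"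
    using edge_point[OF j] by blast
  have "(1 - u) * sqrt (a * X j) + u * sqrt (a * X (Suc j)) \<le> sqrt (a * x)"
  proof -
    have "a * x = (1 - u) * (a * X j) + u * (a * X (Suc j))" unfolding u(3) by (simp add: algebra_simps)
    thus ?thesis using sqrt_convex_comb_le[of "a * X j" "a * X (Suc j)" u] X_nonneg j assms(1) u(1,2) by simp
  qed
  moreover have "(1 - u) * sqrt (- Y j) + u * sqrt (- Y (Suc j)) \<le> sqrt (- edge_line j x)"
  proof -
    have "- edge_line j x = (1 - u) * (- Y j) + u * (- Y (Suc j))" unfolding u(4) by (simp add: algebra_simps)
    thus ?thesis using sqrt_convex_comb_le[of "- Y j" "- Y (Suc j)" u] Y_nonpos j u(1,2) by simp
  qed
  moreover have "(1 - u) * m + u * m \<le> (1 - u) * (sqrt (a * X j) + sqrt (- Y j))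
      + u * (sqrt (a * X (Suc j)) + sqrt (- Y (Suc j)))"
    using lower[of j] lower[of "Suc j"] j u(1,2) by (intro add_mono mult_left_mono) auto
  ultimately have "m \<le> sqrt (a * x) + sqrt (- edge_line j x)" by (simp add: algebra_simps)
  hence "sqrt (- y) \<le> sqrt (- edge_line j x)" using z(4) by linarith
  hence "edge_line j x \<le> y" by simp
  thus "z \<in> upper_region" unfolding upper_region_def using z \<open>x \<le> X n\<close> j by auto
qed

lemma curve_subset_parabolic_region:
  assumes "0 < a" and upper: "\<And>k. 1 \<le> k \<Longrightarrow> k < n \<Longrightarrow> sqrt (a * X (Suc k)) + sqrt (- Y k) \<le> t"
  shows "curve \<subseteq> parabolic_region a t"
proof -
  have "closed_segment (vertex k) (vertex (k + 1)) \<subseteq> parabolic_region a t" if "1 \<le> k" "k < n" for k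
  proof
    fix w assume "w \<in> closed_segment (vertex k) (vertex (k + 1))"
    then obtain u where u: "0 \<le> u" "u \<le> 1"
      and w: "w = ((1 - u) * X k + u * X (Suc k), (1 - u) * Y k + u * Y (Suc k))"
      by (auto simp: in_segment vertex_def)
    show "w \<in> parabolic_region a t" unfolding w
      using convex_comb_between[OF u, of "X k" "X (Suc k)"] convex_comb_between[OF u, of "Y k" "Y (Suc k)"]
        X_less_Suc[OF that] Y_less_Suc[OF that] X_nonneg[of k] Y_nonpos[of "Suc k"] upper[OF that] that
      by (intro mem_parabolic_regionI[OF assms(1)]) auto
  qed
  moreover have "closed_segment 0 (vertex 1) \<subseteq> parabolic_region a t"
  proof
    fix w assume "w \<in> closed_segment 0 (vertex 1)"
    then obtain u where u: "0 \<le> u" "u \<le> 1" and "w = u *\<^sub>R vertex 1" by (auto simp: in_segment)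
    hence w: "w = (0, u * Y 1)" unfolding vertex_def X_1 by simp
    have "(1 - u) * Y 1 \<le> 0" "u * Y 1 \<le> 0" using u Y_1_neg by (simp_all add: mult_nonneg_nonpos)
    hence "Y 1 \<le> u * Y 1" "u * Y 1 \<le> 0" by (simp_all add: algebra_simps)
    thus "w \<in> parabolic_region a t" unfolding w using upper[of 1] two_le_n X_nonneg[of 2]
      by (intro mem_parabolic_regionI[OF assms(1)]) (auto simp: numeral_2_eq_2)
  qed
  moreover have "closed_segment (vertex n) 0 \<subseteq> parabolic_region a t"
  proof
    fix w assume "w \<in> closed_segment (vertex n) 0"
    then obtain u where u: "0 \<le> u" "u \<le> 1" and "w = (1 - u) *\<^sub>R vertex n" by (auto simp: in_segment)
    hence w: "w = ((1 - u) * X n, 0)" unfolding vertex_def Y_n by simp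
    have "0 \<le> (1 - u) * X n" "(1 - u) * X n \<le> X n"
      using convex_comb_between[OF u, of 0 "X n"] X_n_pos by (auto simp: algebra_simps)
    moreover have "Suc (n - 1) = n" using two_le_n by simp
    ultimately show "w \<in> parabolic_region a t" unfolding w
      using upper[of "n - 1"] two_le_n Y_nonpos[of "n - 1"]
      by (intro mem_parabolic_regionI[OF assms(1), of _ "X n" "Y (n - 1)"]) auto
  qed
  ultimately show ?thesis unfolding curve_def by fastforce
qed

end

section \<open>The vertices of gamma\<close>

lemma n_minus_mult_pos:
  assumes "0 < p" "p < 1" "0 < n" "t \<le> real n"
  shows "0 < real n - t * p"
proof (cases "0 \<le> t")
  case True
  have "t * p \<le> real n * p" using assms by (intro mult_right_mono) auto
  also have "\<dots> < real n" using assms by simp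
  finally show ?thesis by simp
next
  case False
  hence "t * p < 0" using assms by (simp add: mult_neg_pos)
  thus ?thesis using assms by simp
qed

definition Fhat :: "nat \<Rightarrow> real \<Rightarrow> nat \<Rightarrow> real" where
  "Fhat n p k = 1 / ((real n - real k * p) * (real n - (real k - 1) * p))"

lemma Ehat_eq_Fhat_diff:
  assumes "0 < p" "p < 1" "1 \<le> i" "i \<le> n" "1 \<le> j" "j \<le> n"
  shows "Ehat n p j i = (Fhat n p j - Fhat n p i) / p"
proof -
  define Ai where "Ai = real n - real i * p"
  define Aj where "Aj = real n - real j * p"
  have Bi: "real n - (real i - 1) * p = Ai + p" and Bj: "real n - (real j - 1) * p = Aj + p"
    unfolding Ai_def Aj_def by (simp_all add: algebra_simps)
  have "0 < Ai" "0 < Aj" "0 < real n - (real i - 1) * p" "0 < real n - (real j - 1) * p"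
    unfolding Ai_def Aj_def by (intro n_minus_mult_pos; use assms in simp)+
  hence pos: "Ai \<noteq> 0" "Aj \<noteq> 0" "Ai + p \<noteq> 0" "Aj + p \<noteq> 0" unfolding Bi Bj by simp_all
  have "(real j - real i) * (2 * real n - (real i + real j - 1) * p) = (Ai - Aj) * (Ai + Aj + p) / p"
    unfolding Ai_def Aj_def using assms(1) by (simp add: field_simps)
  hence "Ehat n p j i = (Ai - Aj) * (Ai + Aj + p) / p / (Ai * (Ai + p) * Aj * (Aj + p))"
    unfolding Ehat_def Bi Bj Ai_def[symmetric] Aj_def[symmetric] by simp
  also have "\<dots> = (1 / (Aj * (Aj + p)) - 1 / (Ai * (Ai + p))) / p"
    using pos assms(1) by (simp add: divide_simps) algebra
  also have "\<dots> = (Fhat n p j - Fhat n p i) / p"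
    unfolding Fhat_def Bi Bj Ai_def[symmetric] Aj_def[symmetric] ..
  finally show ?thesis .
qed

lemma sum_pairs_stdbasis_fst:
  fixes f :: "nat \<Rightarrow> nat \<Rightarrow> real"
  assumes "1 \<le> k"
  shows "(\<Sum>(i, j)\<in>{(i, j). 1 \<le> i \<and> i < j \<and> j \<le> n}. f j i * stdbasis i k) = (\<Sum>j\<in>{k<..n}. f j k)"
proof -
  let ?P = "{(i, j). 1 \<le> i \<and> i < j \<and> j \<le> n}"
  have "finite ?P" by (rule finite_subset[of _ "{0..n} \<times> {0..n}"]) auto
  have "(\<Sum>(i, j)\<in>?P. f j i * stdbasis i k) = (\<Sum>z\<in>{z\<in>?P. fst z = k}. f (snd z) (fst z))"
    unfolding sum.inter_filter[OF \<open>finite ?P\<close>]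
    by (rule sum.cong) (auto simp: stdbasis_def)
  also have "{z\<in>?P. fst z = k} = (\<lambda>j. (k, j)) ` {k<..n}" using assms by auto
  finally show ?thesis by (simp add: sum.reindex inj_on_def)
qed

lemma sum_pairs_stdbasis_snd:
  fixes f :: "nat \<Rightarrow> nat \<Rightarrow> real"
  assumes "k \<le> n"
  shows "(\<Sum>(i, j)\<in>{(i, j). 1 \<le> i \<and> i < j \<and> j \<le> n}. f j i * stdbasis j k) = (\<Sum>i\<in>{1..<k}. f k i)"
proof -
  let ?P = "{(i, j). 1 \<le> i \<and> i < j \<and> j \<le> n}"
  have "finite ?P" by (rule finite_subset[of _ "{0..n} \<times> {0..n}"]) auto
  have "(\<Sum>(i, j)\<in>?P. f j i * stdbasis j k) = (\<Sum>z\<in>{z\<in>?P. snd z = k}. f (snd z) (fst z))"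
    unfolding sum.inter_filter[OF \<open>finite ?P\<close>]
    by (rule sum.cong) (auto simp: stdbasis_def)
  also have "{z\<in>?P. snd z = k} = (\<lambda>i. (i, k)) ` {1..<k}" using assms by auto
  finally show ?thesis by (simp add: sum.reindex inj_on_def)
qed

lemma gammavec_eq:
  assumes "0 < p" "p < 1" "1 \<le> k" "k \<le> n"
  shows "gammavec n p k = ((\<Sum>j\<in>{1..n}. Fhat n p j) - real n * Fhat n p k) / p"
proof -
  let ?F = "Fhat n p"
  have "gammavec n p k =
      (\<Sum>(i, j)\<in>{(i, j). 1 \<le> i \<and> i < j \<and> j \<le> n}. Ehat n p j i * stdbasis i k)
      - (\<Sum>(i, j)\<in>{(i, j). 1 \<le> i \<and> i < j \<and> j \<le> n}. Ehat n p j i * stdbasis j k)"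
    unfolding gammavec_def by (simp add: right_diff_distrib sum_subtractf case_prod_beta)
  also have "\<dots> = (\<Sum>j\<in>{k<..n}. Ehat n p j k) - (\<Sum>i\<in>{1..<k}. Ehat n p k i)"
    unfolding sum_pairs_stdbasis_fst[OF assms(3)] sum_pairs_stdbasis_snd[OF assms(4)] ..
  also have "\<dots> = (\<Sum>j\<in>{k<..n}. (?F j - ?F k) / p) - (\<Sum>i\<in>{1..<k}. (?F k - ?F i) / p)"
    using assms by (intro arg_cong2[where f = "(-)"] sum.cong refl Ehat_eq_Fhat_diff) auto
  also have "\<dots> = ((\<Sum>j\<in>{k<..n}. ?F j) + (\<Sum>i\<in>{1..<k}. ?F i)
      - real (n - k) * ?F k - real (k - 1) * ?F k) / p"
    by (simp add: sum_subtractf sum_divide_distrib[symmetric] diff_divide_distrib add_divide_distrib)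
  also have "(\<Sum>j\<in>{k<..n}. ?F j) + (\<Sum>i\<in>{1..<k}. ?F i) = (\<Sum>j\<in>{1..n}. ?F j) - ?F k"
  proof -
    have "{1..n} = insert k ({1..<k} \<union> {k<..n})" using assms by auto
    moreover have "(\<Sum>i\<in>{1..<k} \<union> {k<..n}. ?F i) = (\<Sum>i\<in>{1..<k}. ?F i) + (\<Sum>j\<in>{k<..n}. ?F j)"
      by (rule sum.union_disjoint) auto
    ultimately show ?thesis by simp
  qed
  also have "real (n - k) + real (k - 1) + 1 = real n" using assms by (simp add: of_nat_diff)
  ultimately show ?thesis by (simp add: algebra_simps)
qed

definition vertex_x :: "nat \<Rightarrow> real \<Rightarrow> nat \<Rightarrow> real" where
  "vertex_x n p k = real k * (real k - 1) / ((real n - real k * p) * (real n - (real k - 1) * p))"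

definition vertex_y :: "nat \<Rightarrow> real \<Rightarrow> nat \<Rightarrow> real" where
  "vertex_y n p k = - ((real n - real k) * (real n - real k + 1) /
      ((1 - p) * (real n - real k * p) * (real n - (real k - 1) * p)))"

definition gamma_gap :: "nat \<Rightarrow> real \<Rightarrow> nat \<Rightarrow> real" where
  "gamma_gap n p k = 2 * real n /
     ((real n - (real k - 1) * p) * (real n - real k * p) * (real n - (real k + 1) * p))"

lemma gamma_denominators_pos:
  assumes "0 < p" "p < 1" "1 \<le> k" "k < n"
  shows "0 < real n - (real k - 1) * p" "0 < real n - real k * p" "0 < real n - (real k + 1) * p"
  by (intro n_minus_mult_pos; use assms in simp)+

lemma gamma_gap_pos: "0 < p \<Longrightarrow> p < 1 \<Longrightarrow> 1 \<le> k \<Longrightarrow> k < n \<Longrightarrow> 0 < gamma_gap n p k"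
  unfolding gamma_gap_def using gamma_denominators_pos[of p k n] by simp

lemma hgap_gammavec:
  assumes "0 < p" "p < 1" "1 \<le> k" "k < n"
  shows "hgap (gammavec n p) k = gamma_gap n p k"
proof -
  define A where "A = real n - real k * p"
  have nz: "A \<noteq> 0" "A + p \<noteq> 0" "A - p \<noteq> 0" "p \<noteq> 0"
    using gamma_denominators_pos[OF assms] assms unfolding A_def by (auto simp: algebra_simps)
  have "hgap (gammavec n p) k = real n * (Fhat n p (k + 1) - Fhat n p k) / p"
    unfolding hgap_def using assms by (simp add: gammavec_eq field_simps)
  also have "\<dots> = real n * (1 / ((A - p) * A) - 1 / (A * (A + p))) / p"
    unfolding Fhat_def A_def by (simp add: algebra_simps)
  also have "\<dots> = 2 * real n / ((A + p) * A * (A - p))"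
    using nz by (simp add: divide_simps)
  also have "\<dots> = gamma_gap n p k"
    unfolding gamma_gap_def A_def by (simp add: algebra_simps)
  finally show ?thesis .
qed

lemma vertex_x_step:
  assumes "0 < p" "p < 1" "1 \<le> k" "k < n"
  shows "vertex_x n p (Suc k) - vertex_x n p k = real k * gamma_gap n p k"
proof -
  define A where "A = real n - real k * p"
  have nz: "A \<noteq> 0" "A + p \<noteq> 0" "A - p \<noteq> 0" "p \<noteq> 0"
    using gamma_denominators_pos[OF assms] assms unfolding A_def by (auto simp: algebra_simps)
  have "vertex_x n p (Suc k) - vertex_x n p k
      = (real k + 1) * real k / ((A - p) * A) - real k * (real k - 1) / (A * (A + p))"
    unfolding vertex_x_def A_def by (simp add: algebra_simps)
  also have "\<dots> = real k * (2 * (A + real k * p) / ((A + p) * A * (A - p)))"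
    using nz by (simp add: divide_simps) (simp add: algebra_simps)
  also have "\<dots> = real k * gamma_gap n p k"
    unfolding gamma_gap_def A_def by (simp add: algebra_simps)
  finally show ?thesis .
qed

lemma vertex_y_step:
  assumes "0 < p" "p < 1" "1 \<le> k" "k < n"
  shows "vertex_y n p (Suc k) - vertex_y n p k = (real n - real k) * gamma_gap n p k"
proof -
  define A where "A = real n - real k * p"
  have nz: "A \<noteq> 0" "A + p \<noteq> 0" "A - p \<noteq> 0" "p \<noteq> 0" "1 - p \<noteq> 0"
    using gamma_denominators_pos[OF assms] assms unfolding A_def by (auto simp: algebra_simps)
  have "vertex_y n p (Suc k) - vertex_y n p k
      = (A + real k * p - real k) * (A + real k * p - real k + 1) / ((1 - p) * A * (A + p))
        - (A + real k * p - real k - 1) * (A + real k * p - real k) / ((1 - p) * (A - p) * A)"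
    unfolding vertex_y_def A_def by (simp add: algebra_simps)
  also have "\<dots> = (A + real k * p - real k) * (2 * (A + real k * p)) / ((A + p) * A * (A - p))"
    using nz by (simp add: divide_simps) (simp add: algebra_simps)
  also have "\<dots> = (real n - real k) * gamma_gap n p k"
    unfolding gamma_gap_def A_def by (simp add: algebra_simps)
  finally show ?thesis .
qed

lemma rpt_gammavec:
  assumes "0 < p" "p < 1" "1 \<le> k" "k \<le> n"
  shows "rpt n (gammavec n p) k = (vertex_x n p k, vertex_y n p k)"
proof -
  have "(\<Sum>i\<in>{1..<k}. real i * hgap (gammavec n p) i)
      = (\<Sum>i\<in>{1..<k}. vertex_x n p (Suc i) - vertex_x n p i)"
    using assms by (intro sum.cong refl) (simp add: hgap_gammavec vertex_x_step)
  also have "\<dots> = vertex_x n p k - vertex_x n p 1" by (rule sum_Suc_diff'[OF assms(3)])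
  also have "vertex_x n p 1 = 0" by (simp add: vertex_x_def)
  finally have x: "(\<Sum>i\<in>{1..<k}. real i * hgap (gammavec n p) i) = vertex_x n p k" by simp
  have "(\<Sum>i\<in>{k..<n}. (real n - real i) * hgap (gammavec n p) i)
      = (\<Sum>i\<in>{k..<n}. vertex_y n p (Suc i) - vertex_y n p i)"
    using assms by (intro sum.cong refl) (simp add: hgap_gammavec vertex_y_step)
  also have "\<dots> = vertex_y n p n - vertex_y n p k" by (rule sum_Suc_diff'[OF assms(4)])
  also have "vertex_y n p n = 0" by (simp add: vertex_y_def)
  finally have y: "(\<Sum>i\<in>{k..<n}. (real n - real i) * hgap (gammavec n p) i) = - vertex_y n p k"
    by simp
  show ?thesis unfolding rpt_def x y by simp
qed

definition inner_radius :: "nat \<Rightarrow> real \<Rightarrow> real" where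
  "inner_radius n a = (1 - 1 / (real n * a)) / sqrt a"

definition outer_radius :: "nat \<Rightarrow> real \<Rightarrow> real" where
  "outer_radius n a = (1 + 2 / (real n * a)) / sqrt a"

lemma inner_radius_le_vertex:
  assumes "0 < p" "p < 1" "1 \<le> k" "k \<le> n"
  shows "inner_radius n (1 - p) \<le> sqrt ((1 - p) * vertex_x n p k) + sqrt (- vertex_y n p k)"
proof -
  define a where "a = 1 - p"
  have a: "a > 0" using assms unfolding a_def by simp
  define B0 where "B0 = real n - (real k - 1) * p"
  define B1 where "B1 = real n - real k * p"
  have B1: "B1 > 0" unfolding B1_def by (rule n_minus_mult_pos) (use assms in auto)
  have B01: "B1 \<le> B0" unfolding B0_def B1_def using assms by (simp add: algebra_simps)
  have "(real k - 1) * p \<le> real n * p" using assms by (intro mult_right_mono) auto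
  hence B0na: "B0 \<ge> real n * a" unfolding B0_def a_def by (simp add: algebra_simps)
  have na: "real n * a > 0" using a assms by simp
  define u where "u = (real k - 1) / B0"
  define v where "v = (real n - real k) / B0"
  have "u \<ge> 0" "v \<ge> 0" unfolding u_def v_def using assms B0na na by simp_all
  have "u \<le> real k / B1" unfolding u_def by (rule frac_le) (use B1 B01 in auto)
  moreover have "vertex_x n p k = (real k / B1) * u"
    unfolding vertex_x_def B0_def B1_def u_def by simp
  ultimately have "u * u \<le> vertex_x n p k" using \<open>u \<ge> 0\<close> by (metis mult_right_mono)
  hence "(sqrt a * u)\<^sup>2 \<le> a * vertex_x n p k" using a by (simp add: power2_eq_square algebra_simps)
  hence x: "sqrt a * u \<le> sqrt (a * vertex_x n p k)" by (rule real_le_rsqrt)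
  define P where "P = (real n - real k) / B1"
  define Q where "Q = (real n - real k + 1) / B0"
  have "v \<le> P" unfolding v_def P_def by (rule frac_le) (use B1 B01 assms in auto)
  moreover have "v \<le> Q" unfolding v_def Q_def using B0na na by (simp add: divide_right_mono)
  ultimately have "v * v \<le> P * Q" using \<open>v \<ge> 0\<close> by (intro mult_mono) auto
  moreover have "- vertex_y n p k = P * Q / a"
    unfolding vertex_y_def B0_def B1_def a_def P_def Q_def by simp
  ultimately have "(v / sqrt a)\<^sup>2 \<le> - vertex_y n p k"
    using a by (simp add: power_divide power2_eq_square divide_right_mono)
  hence y: "v / sqrt a \<le> sqrt (- vertex_y n p k)" by (rule real_le_rsqrt)
  have "sqrt a * u + v / sqrt a = (a * (real k - 1) + (real n - real k)) / (sqrt a * B0)"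
    unfolding u_def v_def using a B0na na by (simp add: field_simps)
  also have "a * (real k - 1) + (real n - real k) = B0 - 1"
    unfolding a_def B0_def by (simp add: algebra_simps)
  also have "(B0 - 1) / (sqrt a * B0) = (1 - 1 / B0) / sqrt a" using B0na na a by (simp add: field_simps)
  also have "\<dots> \<ge> inner_radius n a"
    unfolding inner_radius_def using B0na na a by (intro divide_right_mono) (auto simp: frac_le)
  finally show ?thesis using x y unfolding a_def by linarith
qed

text \<open>On the edge from r_k to r_(k+1) the abscissa is at most X_(k+1) and the ordinate at least
  Y_k, so the corner (X_(k+1), Y_k) bounds the whole edge from outside.\<close>
lemma outer_radius_ge_vertex:
  assumes "0 < p" "p < 1" "1 \<le> k" "k < n"
  shows "sqrt ((1 - p) * vertex_x n p (Suc k)) + sqrt (- vertex_y n p k) \<le> outer_radius n (1 - p)"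
proof -
  define a where "a = 1 - p"
  have a: "a > 0" using assms unfolding a_def by simp
  define B0 where "B0 = real n - (real k - 1) * p"
  define B1 where "B1 = real n - real k * p"
  define C1 where "C1 = real n - (real k + 1) * p"
  have C1B1: "C1 \<le> B1" "B1 \<le> B0" unfolding B0_def B1_def C1_def using assms by (simp_all add: algebra_simps)
  have "(real k + 1) * p \<le> real n * p" using assms by (intro mult_right_mono) auto
  hence C1na: "C1 \<ge> real n * a" unfolding C1_def a_def by (simp add: algebra_simps)
  have na: "real n * a > 0" using a assms by simp
  define u where "u = (real k + 1) / C1"
  define v where "v = (real n - real k + 1) / C1"
  have "u \<ge> 0" "v \<ge> 0" unfolding u_def v_def using assms C1na na by simp_all
  have "real k / B1 \<le> u" unfolding u_def by (rule frac_le) (use C1na na C1B1 in auto)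
  moreover have "vertex_x n p (Suc k) = u * (real k / B1)"
    unfolding vertex_x_def C1_def B1_def u_def by (simp add: algebra_simps)
  ultimately have "vertex_x n p (Suc k) \<le> u * u" using \<open>u \<ge> 0\<close> by (metis mult_left_mono)
  hence "a * vertex_x n p (Suc k) \<le> (sqrt a * u)\<^sup>2" using a by (simp add: power2_eq_square algebra_simps)
  hence x: "sqrt (a * vertex_x n p (Suc k)) \<le> sqrt a * u"
    by (rule real_le_lsqrt[rotated]) (use a \<open>u \<ge> 0\<close> in simp)
  define P where "P = (real n - real k) / B1"
  define Q where "Q = (real n - real k + 1) / B0"
  have "P \<le> v" unfolding v_def P_def by (rule frac_le) (use C1na na C1B1 assms in auto)
  moreover have "Q \<le> v" unfolding v_def Q_def by (rule frac_le) (use C1na na C1B1 assms in auto)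
  moreover have "P \<ge> 0" "Q \<ge> 0" unfolding P_def Q_def using C1na na C1B1 assms by auto
  ultimately have "P * Q \<le> v * v" using \<open>v \<ge> 0\<close> by (intro mult_mono) auto
  moreover have "- vertex_y n p k = P * Q / a"
    unfolding vertex_y_def B0_def B1_def a_def P_def Q_def by simp
  ultimately have "- vertex_y n p k \<le> (v / sqrt a)\<^sup>2"
    using a by (simp add: power_divide power2_eq_square divide_right_mono)
  hence y: "sqrt (- vertex_y n p k) \<le> v / sqrt a"
    by (rule real_le_lsqrt[rotated]) (use a \<open>v \<ge> 0\<close> in simp)
  have "sqrt a * u + v / sqrt a = (a * (real k + 1) + (real n - real k + 1)) / (sqrt a * C1)"
    unfolding u_def v_def using a C1na na by (simp add: field_simps)
  also have "a * (real k + 1) + (real n - real k + 1) = C1 + 2"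
    unfolding a_def C1_def by (simp add: algebra_simps)
  also have "(C1 + 2) / (sqrt a * C1) = (1 + 2 / C1) / sqrt a" using C1na na a by (simp add: field_simps)
  also have "\<dots> \<le> outer_radius n a"
    unfolding outer_radius_def using C1na na a by (intro divide_right_mono) (auto simp: frac_le)
  finally show ?thesis using x y unfolding a_def by linarith
qed

section \<open>Convergence\<close>

lemma concave_chain_gammavec:
  assumes "0 < p" "p < 1" "2 \<le> n"
  shows "concave_chain n (vertex_x n p) (vertex_y n p) (gamma_gap n p)"
proof
  fix k assume "1 \<le> k" "k < n"
  thus "vertex_x n p (Suc k) - vertex_x n p k = real k * gamma_gap n p k"
    "vertex_y n p (Suc k) - vertex_y n p k = (real n - real k) * gamma_gap n p k"
    "0 < gamma_gap n p k"
    using assms vertex_x_step vertex_y_step gamma_gap_pos by auto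
qed (use assms in \<open>auto simp: vertex_x_def vertex_y_def\<close>)

lemma Rring_gammavec:
  assumes "0 < p" "p < 1" "2 \<le> n"
  defines "C \<equiv> concave_chain.curve n (vertex_x n p) (vertex_y n p)"
  shows "Rring n (gammavec n p) = C \<union> inside C"
proof -
  interpret concave_chain n "vertex_x n p" "vertex_y n p" "gamma_gap n p"
    by (rule concave_chain_gammavec[OF assms(1-3)])
  have "rpt n (gammavec n p) k = vertex k" if "1 \<le> k" "k \<le> n" for k
    unfolding vertex_def using rpt_gammavec[OF assms(1,2) that] .
  hence "boundary_curve n (gammavec n p) = curve"
    unfolding boundary_curve_def curve_def using assms(3)
    by (intro arg_cong2[where f = "(\<union>)"] arg_cong2[where f = "closed_segment"] SUP_cong refl) auto
  thus ?thesis unfolding Rring_def C_def by simp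
qed

lemma Rring_gammavec_between_parabolic_regions:
  assumes "0 < p" "p < 1" "2 \<le> n"
  shows "parabolic_region (1 - p) (inner_radius n (1 - p)) \<subseteq> Rring n (gammavec n p)"
    "Rring n (gammavec n p) \<subseteq> parabolic_region (1 - p) (outer_radius n (1 - p))"
proof -
  interpret concave_chain n "vertex_x n p" "vertex_y n p" "gamma_gap n p"
    by (rule concave_chain_gammavec[OF assms])
  have R: "Rring n (gammavec n p) = curve \<union> inside curve" by (rule Rring_gammavec[OF assms])
  have "parabolic_region (1 - p) (inner_radius n (1 - p)) \<subseteq> upper_region"
    using assms by (intro parabolic_region_subset_upper_region inner_radius_le_vertex) auto
  thus "parabolic_region (1 - p) (inner_radius n (1 - p)) \<subseteq> Rring n (gammavec n p)"
    unfolding R using upper_region_subset_inside by blast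
  have "curve \<subseteq> parabolic_region (1 - p) (outer_radius n (1 - p))"
    using assms by (intro curve_subset_parabolic_region outer_radius_ge_vertex) auto
  thus "Rring n (gammavec n p) \<subseteq> parabolic_region (1 - p) (outer_radius n (1 - p))"
    unfolding R using assms by (intro inside_subset_parabolic_region) auto
qed

lemma Rring_gammavec_lmeasurable:
  assumes "0 < p" "p < 1" "2 \<le> n"
  shows "Rring n (gammavec n p) \<in> lmeasurable"
proof -
  let ?C = "concave_chain.curve n (vertex_x n p) (vertex_y n p)"
  have "compact ?C" unfolding concave_chain.curve_def[OF concave_chain_gammavec[OF assms]]
    by (intro compact_Un compact_UN finite_atLeastLessThan compact_segment)
  hence "closed (?C \<union> inside ?C)"
    unfolding union_with_inside by (intro closed_Compl open_outside compact_imp_closed)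
  moreover have "bounded (Rring n (gammavec n p))"
    using assms bounded_parabolic_region[of "1 - p"] Rring_gammavec_between_parabolic_regions(2)[OF assms]
    by (auto intro: bounded_subset)
  ultimately show ?thesis
    by (simp add: Rring_gammavec[OF assms] lmeasurable_compact compact_eq_bounded_closed)
qed

lemma Area_gammavec_bounds:
  assumes "0 < p" "p < 1" "2 \<le> n" "1 \<le> real n * (1 - p)"
  shows "inner_radius n (1 - p) ^ 4 / (6 * (1 - p)) \<le> Area n (gammavec n p)"
    "Area n (gammavec n p) \<le> outer_radius n (1 - p) ^ 4 / (6 * (1 - p))"
proof -
  have "0 < 1 - p" "0 \<le> inner_radius n (1 - p)" "0 \<le> outer_radius n (1 - p)"
    using assms by (auto simp: inner_radius_def outer_radius_def)
  note sandwich = Rring_gammavec_between_parabolic_regions[OF assms(1-3)]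
  note meas = Rring_gammavec_lmeasurable[OF assms(1-3)] parabolic_region_lmeasurable[OF \<open>0 < 1 - p\<close>]
  have "measure lebesgue (parabolic_region (1 - p) (inner_radius n (1 - p))) \<le> Area n (gammavec n p)"
    unfolding Area_def by (rule measure_mono_fmeasurable[OF sandwich(1)]) (use meas in \<open>auto dest: fmeasurableD\<close>)
  moreover have "Area n (gammavec n p) \<le> measure lebesgue (parabolic_region (1 - p) (outer_radius n (1 - p)))"
    unfolding Area_def by (rule measure_mono_fmeasurable[OF sandwich(2)]) (use meas in \<open>auto dest: fmeasurableD\<close>)
  ultimately show "inner_radius n (1 - p) ^ 4 / (6 * (1 - p)) \<le> Area n (gammavec n p)"
    "Area n (gammavec n p) \<le> outer_radius n (1 - p) ^ 4 / (6 * (1 - p))"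
    using measure_parabolic_region \<open>0 < 1 - p\<close> \<open>0 \<le> inner_radius n (1 - p)\<close>
      \<open>0 \<le> outer_radius n (1 - p)\<close> by simp_all
qed

lemma inner_radius_tendsto:
  assumes "0 < a"
  shows "(\<lambda>n. inner_radius n a) \<longlonglongrightarrow> 1 / sqrt a"
proof -
  have "(\<lambda>n. (1 - (1 / a) * (1 / real n)) / sqrt a) \<longlonglongrightarrow> (1 - (1 / a) * 0) / sqrt a"
    using assms by (intro tendsto_intros) auto
  thus ?thesis by (simp add: inner_radius_def mult.commute)
qed

lemma outer_radius_tendsto:
  assumes "0 < a"
  shows "(\<lambda>n. outer_radius n a) \<longlonglongrightarrow> 1 / sqrt a"
proof -
  have "(\<lambda>n. (1 + (2 / a) * (1 / real n)) / sqrt a) \<longlonglongrightarrow> (1 + (2 / a) * 0) / sqrt a"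
    using assms by (intro tendsto_intros) auto
  thus ?thesis by (simp add: outer_radius_def mult.commute)
qed

lemma eventually_less_real_mult:
  assumes "0 < a"
  shows "\<forall>\<^sub>F n in sequentially. c < real n * a"
proof -
  have "\<forall>\<^sub>F n in sequentially. c / a < real n"
    using filterlim_real_sequentially by (simp add: filterlim_at_top_dense)
  thus ?thesis by eventually_elim (use assms in \<open>simp add: pos_divide_less_eq\<close>)
qed

lemma Area_gammavec_tendsto:
  assumes "0 < p" "p < 1"
  shows "(\<lambda>n. Area n (gammavec n p)) \<longlonglongrightarrow> (1 / sqrt (1 - p)) ^ 4 / (6 * (1 - p))"
proof (rule tendsto_sandwich)
  have ev: "\<forall>\<^sub>F n in sequentially. 2 \<le> n \<and> 1 < real n * (1 - p)"
    using assms by (intro eventually_conj eventually_ge_at_top eventually_less_real_mult) auto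
  show "\<forall>\<^sub>F n in sequentially. inner_radius n (1 - p) ^ 4 / (6 * (1 - p)) \<le> Area n (gammavec n p)"
    using ev by eventually_elim (use assms Area_gammavec_bounds(1) in auto)
  show "\<forall>\<^sub>F n in sequentially. Area n (gammavec n p) \<le> outer_radius n (1 - p) ^ 4 / (6 * (1 - p))"
    using ev by eventually_elim (use assms Area_gammavec_bounds(2) in auto)
  show "(\<lambda>n. inner_radius n (1 - p) ^ 4 / (6 * (1 - p))) \<longlonglongrightarrow> (1 / sqrt (1 - p)) ^ 4 / (6 * (1 - p))"
    "(\<lambda>n. outer_radius n (1 - p) ^ 4 / (6 * (1 - p))) \<longlonglongrightarrow> (1 / sqrt (1 - p)) ^ 4 / (6 * (1 - p))"
    using assms by (intro tendsto_intros inner_radius_tendsto outer_radius_tendsto; simp)+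
qed

lemma Rnorm_gammavec_between_parabolic_regions:
  assumes "0 < p" "p < 1" "2 \<le> n" "1 < real n * (1 - p)"
  defines "s \<equiv> sqrt (1 / sqrt (Area n (gammavec n p)))"
  shows "0 \<le> s * inner_radius n (1 - p)"
    "parabolic_region (1 - p) (s * inner_radius n (1 - p)) \<subseteq> Rnorm n (gammavec n p)"
    "Rnorm n (gammavec n p) \<subseteq> parabolic_region (1 - p) (s * outer_radius n (1 - p))"
proof -
  have "0 \<le> s" unfolding s_def Area_def by simp
  moreover have "0 < inner_radius n (1 - p)" using assms by (simp add: inner_radius_def)
  ultimately show "0 \<le> s * inner_radius n (1 - p)" by simp
  have "0 < inner_radius n (1 - p) ^ 4 / (6 * (1 - p))" using assms by (simp add: inner_radius_def)
  hence "0 < Area n (gammavec n p)" using Area_gammavec_bounds(1)[OF assms(1-3)] assms(4) by simp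
  hence "Rnorm n (gammavec n p) = (\<lambda>z. (s * s) *\<^sub>R z) ` Rring n (gammavec n p)"
    unfolding Rnorm_def s_def by simp
  thus "parabolic_region (1 - p) (s * inner_radius n (1 - p)) \<subseteq> Rnorm n (gammavec n p)"
    "Rnorm n (gammavec n p) \<subseteq> parabolic_region (1 - p) (s * outer_radius n (1 - p))"
    using Rring_gammavec_between_parabolic_regions[OF assms(1-3)] \<open>0 < Area n (gammavec n p)\<close>
    by (auto simp: s_def scaleR_image_parabolic_region[symmetric] image_mono)
qed

lemma limit_radius_eq:
  assumes "0 < a"
  shows "sqrt (1 / sqrt ((1 / sqrt a) ^ 4 / (6 * a))) * (1 / sqrt a) = (6 * a) powr (1/4)"
proof (rule power_eq_imp_eq_base[of _ 4])
  have fourth: "sqrt x ^ 4 = x\<^sup>2" if "0 \<le> x" for x :: real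
  proof -
    have "sqrt x ^ 4 = (sqrt x ^ 2) ^ 2" by (simp flip: power_mult)
    thus ?thesis using that by simp
  qed
  define X where "X = (1 / sqrt a) ^ 4 / (6 * a)"
  have "X = 1 / (6 * a ^ 3)" unfolding X_def using fourth[of a] assms
    by (simp add: power_divide power2_eq_square power3_eq_cube)
  hence "(sqrt (1 / sqrt X) * (1 / sqrt a)) ^ 4 = (6 * a ^ 3) * (1 / a\<^sup>2)"
    using fourth[of "1 / sqrt X"] fourth[of a] assms by (simp add: power_mult_distrib power_divide)
  also have "\<dots> = ((6 * a) powr (1/4)) ^ 4"
    using assms by (simp add: powr_realpow[symmetric] powr_powr power2_eq_square power3_eq_cube)
  finally show "(sqrt (1 / sqrt X) * (1 / sqrt a)) ^ 4 = ((6 * a) powr (1/4)) ^ 4" .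
qed (use assms in auto)

theorem proposition5p4:
  fixes p :: real
  assumes "0 < p" and "p < 1"
  shows "(\<lambda>n. hausdorff_dist (Rnorm n (gammavec n p)) (Rinf p)) \<longlonglongrightarrow> 0"
proof -
  define a where "a = 1 - p"
  have "0 < a" using assms unfolding a_def by simp
  define s where "s n = sqrt (1 / sqrt (Area n (gammavec n p)))" for n
  define A where "A = (1 / sqrt a) ^ 4 / (6 * a)"
  have "s \<longlonglongrightarrow> sqrt (1 / sqrt A)"
    unfolding s_def A_def a_def using Area_gammavec_tendsto[OF assms] assms
    by (intro tendsto_intros) auto
  show ?thesis unfolding Rinf_eq_parabolic_region a_def[symmetric]
  proof (rule hausdorff_dist_parabolic_region_tendsto[OF \<open>0 < a\<close>])
    show "(\<lambda>n. s n * inner_radius n a) \<longlonglongrightarrow> (6 * a) powr (1/4)"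
      "(\<lambda>n. s n * outer_radius n a) \<longlonglongrightarrow> (6 * a) powr (1/4)"
      unfolding limit_radius_eq[OF \<open>0 < a\<close>, symmetric] A_def[symmetric]
      by (intro tendsto_mult \<open>s \<longlonglongrightarrow> sqrt (1 / sqrt A)\<close> inner_radius_tendsto outer_radius_tendsto
          \<open>0 < a\<close>)+
    have "\<forall>\<^sub>F n in sequentially. 2 \<le> n \<and> 1 < real n * a"
      using \<open>0 < a\<close> by (intro eventually_conj eventually_ge_at_top eventually_less_real_mult)
    thus "\<forall>\<^sub>F n in sequentially. 0 \<le> s n * inner_radius n a
        \<and> parabolic_region a (s n * inner_radius n a) \<subseteq> Rnorm n (gammavec n p)
        \<and> Rnorm n (gammavec n p) \<subseteq> parabolic_region a (s n * outer_radius n a)"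
      by eventually_elim (use Rnorm_gammavec_between_parabolic_regions[OF assms] in \<open>simp add: s_def a_def\<close>)
  qed simp
qed

end
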